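(* Let $\mathcal{K}$ be a finite simplicial complex with a fixed total order on its vertex set, and let $(\Lambda_S,d_S)$ be its stories algebra with the differential $d_S$ described below. Then $\mathcal{I}=\bigoplus_{n\ge1}(\mathcal{I}_N^n\oplus\mathcal{I}_S^n)$ is a differential ideal of $\Lambda_S$: it is a two-sided ideal and $d_S(\mathcal{I}^n)\subseteq\mathcal{I}^{n+1}$ for all $n$, where $\mathcal{I}^n=\mathcal{I}_N^n\oplus\mathcal{I}_S^n$.
   Context: A (finite abstract) simplicial complex $\mathcal{K}$ on a finite non-empty vertex set $V$ is a collection of non-empty subsets of $V$ (simplices) containing every singleton $\{v\}$, $v\in V$, and closed under taking non-empty subsets. $\dim P=|P|-1$. For a simplex $P=\{v_0,\ldots,v_n\}$ listed in increasing order of the fixed vertex order, the incidence coefficient is $\epsilon_{v_iP}=(-1)^i$. Stories: a homogeneous $n$-story is a sequence $\langle P_0,\ldots,P_n\rangle$ of simplices of $\mathcal{K}$ with $P_{i-1}\neq P_i$ for $i=1,\ldots,n$; $\Lambda_S=\bigoplus_{n\ge0}\Lambda_S^n$ where $\Lambda_S^n$ is the complex vector space with basis the homogeneous $n$-stories, with product $\langle P_0,\ldots,P_n\rangle\cdot\langle Q_0,\ldots,Q_m\rangle=\langle P_0,\ldots,P_n,Q_1,\ldots,Q_m\rangle$ if $P_n=Q_0$ and $0$ otherwise. The differential $d_S:\Lambda_S^n\to\Lambda_S^{n+1}$ is the linear map with $d_S\langle P_0,\ldots,P_n\rangle=\sum_{Q\neq P_0}\langle Q,P_0,\ldots,P_n\rangle+\sum_{k=1}^n(-1)^k\sum_{Q:\,P_{k-1}\neq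 Q\neq P_k}\langle P_0,\ldots,P_{k-1},Q,P_k,\ldots,P_n\rangle+(-1)^{n+1}\sum_{Q\neq P_n}\langle P_0,\ldots,P_n,Q\rangle$ (sums over simplices $Q$ of $\mathcal{K}$). A story $\langle P_0,\ldots,P_n\rangle$ is fair if for every $i=1,\ldots,n$ there is a vertex $v_i\in P_i$ with $P_{i-1}=P_i\setminus\{v_i\}$, and unfair otherwise; for a fair story $w$ put $\epsilon_w=\prod_{i=1}^n\epsilon_{v_iP_i}$. $\mathcal{I}_N^n$ is the span of all unfair homogeneous $n$-stories. $\mathcal{I}_S^n$ is the span of all differences $\epsilon_w w-\epsilon_{w'}w'$ where $w=\langle P_0,P_1,\ldots,P_{n-1},P_n\rangle$ and $w'=\langle P_0,P_1',\ldots,P_{n-1}',P_n\rangle$ are fair $n$-stories with the same initial simplex $P_0$ and the same final simplex $P_n$ (so $P_0\subseteq P_n$ and $\dim P_n-\dim P_0=n$). *)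

theory Defs
  imports Complex_Main
begin

text \<open>Finite abstract simplicial complex K on vertex set V; the fixed total vertex order
  is the order of the type 'a.\<close>
definition simplicial_complex :: "'a set \<Rightarrow> 'a set set \<Rightarrow> bool" where
  "simplicial_complex V K \<longleftrightarrow> finite V \<and> V \<noteq> {} \<and>
     (\<forall>P\<in>K. P \<noteq> {} \<and> P \<subseteq> V) \<and> (\<forall>v\<in>V. {v} \<in> K) \<and>
     (\<forall>P\<in>K. \<forall>Q. Q \<noteq> {} \<longrightarrow> Q \<subseteq> P \<longrightarrow> Q \<in> K)"

text \<open>Incidence coefficient: (-1)^i where v is the i-th vertex (from 0) of P.\<close>
definition eps_inc :: "'a::linorder \<Rightarrow> 'a set \<Rightarrow> complex" where
  "eps_inc v P = (-1) ^ card {u\<in>P. u < v}"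

text \<open>A homogeneous n-story is a list [P_0,...,P_n] of simplices, consecutive ones distinct.\<close>
definition story :: "'a set set \<Rightarrow> 'a set list \<Rightarrow> bool" where
  "story K s \<longleftrightarrow> s \<noteq> [] \<and> set s \<subseteq> K \<and> (\<forall>i. 0 < i \<and> i < length s \<longrightarrow> s!(i-1) \<noteq> s!i)"

definition fair :: "'a set list \<Rightarrow> bool" where
  "fair s \<longleftrightarrow> (\<forall>i. 0 < i \<and> i < length s \<longrightarrow> (\<exists>v\<in>s!i. s!(i-1) = s!i - {v}))"

definition eps_story :: "'a::linorder set list \<Rightarrow> complex" where
  "eps_story s = (\<Prod>i\<in>{1..<length s}. eps_inc (THE v. v \<in> s!i \<and> s!(i-1) = s!i - {v}) (s!i))"

text \<open>Elements of Lambda_S: finitely supported complex coefficient functions on stories.\<close>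
definition supp :: "('b \<Rightarrow> complex) \<Rightarrow> 'b set" where
  "supp x = {s. x s \<noteq> 0}"

definition elem :: "'a set set \<Rightarrow> ('a set list \<Rightarrow> complex) \<Rightarrow> bool" where
  "elem K x \<longleftrightarrow> finite (supp x) \<and> (\<forall>s\<in>supp x. story K s)"

definition single :: "'b \<Rightarrow> 'b \<Rightarrow> complex" where
  "single s = (\<lambda>w. if w = s then 1 else 0)"

definition cspan :: "('b \<Rightarrow> complex) set \<Rightarrow> ('b \<Rightarrow> complex) set" where
  "cspan G = {x. \<exists>F c. finite F \<and> F \<subseteq> G \<and> x = (\<lambda>w. \<Sum>g\<in>F. c g * g w)}"

definition smult :: "('a set list \<Rightarrow> complex) \<Rightarrow> ('a set list \<Rightarrow> complex) \<Rightarrow> ('a set list \<Rightarrow> complex)" where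
  "smult x y = (\<lambda>w. \<Sum>u\<in>supp x. \<Sum>v\<in>supp y.
      if u \<noteq> [] \<and> v \<noteq> [] \<and> last u = hd v \<and> w = u @ tl v then x u * y v else 0)"

definition dstory :: "'a set set \<Rightarrow> 'a set list \<Rightarrow> ('a set list \<Rightarrow> complex)" where
  "dstory K s = (\<lambda>w. \<Sum>k\<in>{0..length s}.
      \<Sum>Q\<in>{Q\<in>K. (0 < k \<longrightarrow> Q \<noteq> s!(k-1)) \<and> (k < length s \<longrightarrow> Q \<noteq> s!k)}.
        if w = take k s @ Q # drop k s then (-1) ^ k else 0)"

definition dS :: "'a set set \<Rightarrow> ('a set list \<Rightarrow> complex) \<Rightarrow> ('a set list \<Rightarrow> complex)" where
  "dS K x = (\<lambda>w. \<Sum>s\<in>supp x. x s * dstory K s w)"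

definition genN :: "'a set set \<Rightarrow> nat \<Rightarrow> ('a set list \<Rightarrow> complex) set" where
  "genN K n = {single s | s. story K s \<and> length s = n + 1 \<and> \<not> fair s}"

definition genS :: "'a::linorder set set \<Rightarrow> nat \<Rightarrow> ('a set list \<Rightarrow> complex) set" where
  "genS K n = {(\<lambda>w. eps_story u * single u w - eps_story v * single v w) | u v.
      story K u \<and> story K v \<and> length u = n + 1 \<and> length v = n + 1 \<and> fair u \<and> fair v \<and>
      hd u = hd v \<and> last u = last v}"

definition IN :: "'a set set \<Rightarrow> nat \<Rightarrow> ('a set list \<Rightarrow> complex) set" where
  "IN K n = cspan (genN K n)"

definition IS :: "'a::linorder set set \<Rightarrow> nat \<Rightarrow> ('a set list \<Rightarrow> complex) set" where
  "IS K n = cspan (genS K n)"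

text \<open>I^n = I_N^n + I_S^n (the sum is direct).\<close>
definition Ipart :: "'a::linorder set set \<Rightarrow> nat \<Rightarrow> ('a set list \<Rightarrow> complex) set" where
  "Ipart K n = {(\<lambda>w. x w + y w) | x y. x \<in> IN K n \<and> y \<in> IS K n}"

definition Ideal :: "'a::linorder set set \<Rightarrow> ('a set list \<Rightarrow> complex) set" where
  "Ideal K = cspan (\<Union>n\<in>{1..}. genN K n \<union> genS K n)"

end

theory Submission
  imports Defs "HOL-Library.Function_Algebras"
begin

(* Everything in sight is linear, so it suffices to test stories against generators of I.
   Gluing stories u and v along last u = hd v gives a story that is fair iff both are, with
   sign eps u * eps v; so the product of a story with a generator of I is zero, an unfair
   story, or a multiple of a generator of I_S.
   Insertions of d_S producing unfair stories land in I_N. A facet of a facet is never a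
   facet, so a fair story admits fair insertions only at its two ends, and for two fair stories
   with common ends these terms pair up into multiples of generators of I_S. An unfair story
   admits a fair insertion only into a gap P < R of codimension two, in the two ways R - {x}
   and R - {y}; as in the proof of d^2 = 0 for the simplicial boundary these carry opposite
   signs, so their sum is again a multiple of a generator of I_S. *)

section \<open>Pointwise linear algebra\<close>

interpretation lin: module "\<lambda>(c::complex) (f::'b \<Rightarrow> complex) w. c * f w"
  by unfold_locales (auto simp: algebra_simps)

lemma sum_fun_apply: "(\<Sum>a\<in>A. f a) w = (\<Sum>a\<in>A. f a w)"
  by (induction A rule: infinite_finite_induct) auto

lemma supp_single [simp]: "supp (single s) = {s}"
  by (simp add: supp_def single_def)

lemma cspan_eq_span: "cspan G = lin.span G"
  unfolding cspan_def lin.span_explicit by (auto simp: sum_fun_apply fun_eq_iff)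

(* Linear extension of M from the basis of stories; as the sum ranges over supp x,
   lin_ext M is linear only on finitely supported arguments. *)
definition lin_ext :: "('b \<Rightarrow> 'c \<Rightarrow> complex) \<Rightarrow> ('b \<Rightarrow> complex) \<Rightarrow> 'c \<Rightarrow> complex" where
  "lin_ext M x = (\<lambda>w. \<Sum>s\<in>supp x. x s * M s w)"

lemma lin_ext_eq_sum:
  assumes "finite A" "supp x \<subseteq> A"
  shows "lin_ext M x = (\<Sum>s\<in>A. (\<lambda>w. x s * M s w))"
  unfolding lin_ext_def sum_fun_apply using assms
  by (intro ext sum.mono_neutral_left) (auto simp: supp_def)

lemma lin_ext_single [simp]: "lin_ext M (single s) = M s"
  unfolding lin_ext_def supp_single by (simp add: single_def)

lemma lin_ext_lincomb:
  assumes "finite (supp f)" "finite (supp g)"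
  shows "lin_ext M (\<lambda>w. a * f w + b * g w) = (\<lambda>w. a * lin_ext M f w + b * lin_ext M g w)"
proof -
  let ?A = "supp f \<union> supp g"
  have "supp (\<lambda>w. a * f w + b * g w) \<subseteq> ?A" by (auto simp: supp_def)
  then show ?thesis
    using assms by (simp add: lin_ext_eq_sum[of ?A] sum_fun_apply fun_eq_iff sum.distrib
        sum_distrib_left algebra_simps)
qed

lemma lin_ext_diff_singles:
  "lin_ext M (\<lambda>w. a * single u w - b * single v w) = (\<lambda>w. a * M u w - b * M v w)"
  using lin_ext_lincomb[of "single u" "single v" M a "-b"] by simp

lemma lin_ext_in_subspace:
  assumes "lin.subspace T" "finite (supp x)" "\<And>s. s \<in> supp x \<Longrightarrow> M s \<in> T"
  shows "lin_ext M x \<in> T"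
  unfolding lin_ext_eq_sum[OF assms(2) order_refl]
  using assms by (intro lin.subspace_sum) (auto intro: lin.subspace_scale)

lemma lin_ext_span_in_subspace:
  assumes T: "lin.subspace T" and x: "x \<in> lin.span G"
    and G: "\<And>g. g \<in> G \<Longrightarrow> finite (supp g) \<and> lin_ext M g \<in> T"
  shows "lin_ext M x \<in> T"
proof -
  have "finite (supp x) \<and> lin_ext M x \<in> T"
    using x
  proof (induction rule: lin.span_induct_alt)
    case base
    show ?case using lin.subspace_0[OF T] by (simp add: lin_ext_def supp_def zero_fun_def)
  next
    case (step c g y)
    have "supp (\<lambda>w. c * g w + y w) \<subseteq> supp g \<union> supp y" by (auto simp: supp_def)
    moreover have "lin_ext M (\<lambda>w. c * g w + y w) = (\<lambda>w. c * lin_ext M g w + lin_ext M y w)"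
      using lin_ext_lincomb[of g y M c 1] G[OF step(1)] step(2) by simp
    ultimately show ?case
      using G[OF step(1)] step(2) lin.subspace_add[OF T] lin.subspace_scale[OF T]
      by (auto simp: plus_fun_def intro: finite_subset)
  qed
  then show ?thesis ..
qed

section \<open>Stories and fairness\<close>

lemma simplicial_complex_finite: "simplicial_complex V K \<Longrightarrow> finite K"
  unfolding simplicial_complex_def by (meson Pow_iff finite_Pow_iff finite_subset subsetI)

lemma simplicial_complex_finite_simplex: "simplicial_complex V K \<Longrightarrow> P \<in> K \<Longrightarrow> finite P"
  unfolding simplicial_complex_def by (meson finite_subset)

lemma simplicial_complex_nonempty: "simplicial_complex V K \<Longrightarrow> P \<in> K \<Longrightarrow> P \<noteq> {}"
  unfolding simplicial_complex_def by blast

lemma simplicial_complex_face: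
  "simplicial_complex V K \<Longrightarrow> P \<in> K \<Longrightarrow> Q \<noteq> {} \<Longrightarrow> Q \<subseteq> P \<Longrightarrow> Q \<in> K"
  unfolding simplicial_complex_def by blast

lemma story_nonempty: "story K s \<Longrightarrow> s \<noteq> []"
  by (simp add: story_def)

definition facet :: "'a set \<Rightarrow> 'a set \<Rightarrow> bool" where
  "facet P Q \<longleftrightarrow> (\<exists>v\<in>Q. P = Q - {v})"

lemma facet_neq: "facet P Q \<Longrightarrow> P \<noteq> Q"
  unfolding facet_def by blast

lemma facet_facet_not_facet: "facet P Q \<Longrightarrow> facet Q R \<Longrightarrow> \<not> facet P R"
  unfolding facet_def by blast

lemma successively_conv_nth_pred:
  "successively P s \<longleftrightarrow> (\<forall>i. 0 < i \<and> i < length s \<longrightarrow> P (s!(i-1)) (s!i))"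
  unfolding successively_conv_nth by (metis Suc_pred diff_Suc_1 zero_less_Suc)

lemma fair_iff_successively: "fair s \<longleftrightarrow> successively facet s"
  unfolding fair_def successively_conv_nth_pred facet_def by simp

lemma story_iff_successively: "story K s \<longleftrightarrow> s \<noteq> [] \<and> set s \<subseteq> K \<and> successively (\<noteq>) s"
  unfolding story_def successively_conv_nth_pred ..

lemma successively_glue:
  assumes "u \<noteq> []" "v \<noteq> []" "last u = hd v"
  shows "successively P (u @ tl v) \<longleftrightarrow> successively P u \<and> successively P v"
  using assms by (cases v) (auto simp: successively_append_iff successively_Cons)

lemma story_glue: "story K u \<Longrightarrow> story K v \<Longrightarrow> last u = hd v \<Longrightarrow> story K (u @ tl v)"
  unfolding story_iff_successively using successively_glue by (auto dest: list.set_sel(2))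

lemma fair_glue: "u \<noteq> [] \<Longrightarrow> v \<noteq> [] \<Longrightarrow> last u = hd v \<Longrightarrow> fair (u @ tl v) \<longleftrightarrow> fair u \<and> fair v"
  unfolding fair_iff_successively by (rule successively_glue)

lemma last_glue: "u \<noteq> [] \<Longrightarrow> v \<noteq> [] \<Longrightarrow> last u = hd v \<Longrightarrow> last (u @ tl v) = last v"
  by (cases v) auto

lemma length_glue: "v \<noteq> [] \<Longrightarrow> length (u @ tl v) = length u + length v - 1"
  by (cases v) auto

definition insert_at :: "nat \<Rightarrow> 'b \<Rightarrow> 'b list \<Rightarrow> 'b list" where
  "insert_at k Q s = take k s @ Q # drop k s"

lemma length_insert_at [simp]: "k \<le> length s \<Longrightarrow> length (insert_at k Q s) = length s + 1"
  unfolding insert_at_def by simp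

lemma hd_insert_at: "0 < k \<Longrightarrow> s \<noteq> [] \<Longrightarrow> hd (insert_at k Q s) = hd s"
  unfolding insert_at_def by (cases s) auto

lemma last_insert_at: "k < length s \<Longrightarrow> last (insert_at k Q s) = last s"
  unfolding insert_at_def by simp

lemma last_take_nth: "0 < k \<Longrightarrow> k \<le> length s \<Longrightarrow> last (take k s) = s ! (k - 1)"
  by (subst last_conv_nth) (auto simp: min_def)

lemma successively_insert_at:
  assumes "k \<le> length s"
  shows "successively P (insert_at k Q s) \<longleftrightarrow> successively P (take k s) \<and> successively P (drop k s)
     \<and> (0 < k \<longrightarrow> P (s!(k-1)) Q) \<and> (k < length s \<longrightarrow> P Q (s!k))"
proof -
  have "successively P (insert_at k Q s) \<longleftrightarrow> successively P (take k s) \<and> successively P (drop k s)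
      \<and> (take k s = [] \<or> P (last (take k s)) Q) \<and> (drop k s = [] \<or> P Q (hd (drop k s)))"
    unfolding insert_at_def successively_append_iff successively_Cons by auto
  moreover have "(take k s = [] \<or> P (last (take k s)) Q) \<longleftrightarrow> (0 < k \<longrightarrow> P (s!(k-1)) Q)"
    using assms last_take_nth[of k s] by (cases "k = 0") auto
  moreover have "(drop k s = [] \<or> P Q (hd (drop k s))) \<longleftrightarrow> (k < length s \<longrightarrow> P Q (s!k))"
    using assms by (cases "k < length s") (auto simp: hd_drop_conv_nth)
  ultimately show ?thesis by simp
qed

lemma successively_take_drop:
  assumes "k \<le> length s"
  shows "successively P s \<longleftrightarrow> successively P (take k s) \<and> successively P (drop k s)
     \<and> (0 < k \<and> k < length s \<longrightarrow> P (s!(k-1)) (s!k))"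
proof (cases "0 < k \<and> k < length s")
  case True
  then have "take k s \<noteq> []" "drop k s \<noteq> []" by auto
  then show ?thesis
    using successively_append_iff[of P "take k s" "drop k s"] True
    by (simp add: last_take_nth hd_drop_conv_nth)
next
  case False
  then consider "k = 0" | "k = length s" using assms by linarith
  then show ?thesis by cases auto
qed

lemma fair_insert_at:
  "k \<le> length s \<Longrightarrow> fair (insert_at k Q s) \<longleftrightarrow> fair (take k s) \<and> fair (drop k s)
     \<and> (0 < k \<longrightarrow> facet (s!(k-1)) Q) \<and> (k < length s \<longrightarrow> facet Q (s!k))"
  unfolding fair_iff_successively by (rule successively_insert_at)

lemma fair_take_drop:
  "k \<le> length s \<Longrightarrow> fair s \<longleftrightarrow> fair (take k s) \<and> fair (drop k s)
     \<and> (0 < k \<and> k < length s \<longrightarrow> facet (s!(k-1)) (s!k))"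
  unfolding fair_iff_successively by (rule successively_take_drop)

section \<open>Signs of fair stories\<close>

definition facet_sign :: "'a::linorder set \<Rightarrow> 'a set \<Rightarrow> complex" where
  "facet_sign P Q = eps_inc (THE v. v \<in> Q \<and> P = Q - {v}) Q"

lemma facet_sign_diff: "v \<in> Q \<Longrightarrow> facet_sign (Q - {v}) Q = eps_inc v Q"
  unfolding facet_sign_def by (rule arg_cong[where f="\<lambda>v. eps_inc v Q"]) blast

lemma eps_story_short [simp]: "eps_story [] = 1" "eps_story [P] = 1"
  by (simp_all add: eps_story_def)

lemma eps_story_Cons_Cons [simp]: "eps_story (P # Q # r) = facet_sign P Q * eps_story (Q # r)"
proof -
  define s where "s = P # Q # r"
  define f where "f i = eps_inc (THE v. v \<in> s!i \<and> s!(i-1) = s!i - {v}) (s!i)" for i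
  have "eps_story s = prod f {Suc 0..<Suc (Suc (length r))}"
    unfolding eps_story_def f_def s_def by simp
  also have "\<dots> = f 1 * prod (\<lambda>i. f (Suc i)) {Suc 0..<Suc (length r)}"
    by (simp add: prod.atLeast_Suc_lessThan prod.shift_bounds_Suc_ivl del: prod.op_ivl_Suc)
  also have "prod (\<lambda>i. f (Suc i)) {Suc 0..<Suc (length r)} = eps_story (Q # r)"
    unfolding eps_story_def f_def s_def by (intro prod.cong) (auto simp: nth_Cons split: nat.split)
  finally show ?thesis by (simp add: f_def s_def facet_sign_def)
qed

lemma eps_story_append:
  "x \<noteq> [] \<Longrightarrow> y \<noteq> [] \<Longrightarrow> eps_story (x @ y) = eps_story x * facet_sign (last x) (hd y) * eps_story y"
  by (induction x rule: induct_list012) (auto simp: neq_Nil_conv)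

lemma eps_story_glue:
  assumes "u \<noteq> []" "v \<noteq> []" "last u = hd v"
  shows "eps_story (u @ tl v) = eps_story u * eps_story v"
proof (cases "tl v")
  case Nil
  then show ?thesis using assms(2) by (cases v) auto
next
  case (Cons Q r)
  then show ?thesis using assms eps_story_append[OF assms(1), of "tl v"] by (cases v) auto
qed

lemma eps_inc_square [simp]: "eps_inc v P * eps_inc v P = 1"
  by (simp add: eps_inc_def power_mult_distrib[symmetric])

lemma facet_sign_square [simp]: "facet_sign P Q * facet_sign P Q = 1"
  by (simp add: facet_sign_def)

lemma eps_story_square [simp]: "eps_story s * eps_story s = 1"
proof (induction s rule: induct_list012)
  case (3 P Q r)
  have "eps_story (P # Q # r) * eps_story (P # Q # r)
      = (facet_sign P Q * facet_sign P Q) * (eps_story (Q # r) * eps_story (Q # r))"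
    by (simp only: eps_story_Cons_Cons mult_ac)
  then show ?case using "3.IH"(2) by simp
qed simp_all

lemma eps_inc_remove_smaller:
  assumes "finite R" "x \<in> R" "x < y"
  shows "eps_inc y (R - {x}) = - eps_inc y R"
proof -
  have "Suc (card ({u \<in> R. u < y} - {x})) = card {u \<in> R. u < y}"
    by (rule card_Suc_Diff1) (use assms in auto)
  moreover have "{u \<in> R. u < y} - {x} = {u \<in> R - {x}. u < y}" by auto
  ultimately have "card {u \<in> R. u < y} = Suc (card {u \<in> R - {x}. u < y})" by simp
  then show ?thesis unfolding eps_inc_def by simp
qed

lemma eps_inc_remove_larger: "x < y \<Longrightarrow> eps_inc x (R - {y}) = eps_inc x R"
  unfolding eps_inc_def by (rule arg_cong[where f="\<lambda>A. (-1) ^ card A"]) auto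

lemma eps_inc_remove_swap:
  assumes "finite R" "x \<in> R" "y \<in> R" "x \<noteq> y"
  shows "eps_inc y (R - {x}) * eps_inc x R = - (eps_inc x (R - {y}) * eps_inc y R)"
proof (cases "x < y")
  case True
  then show ?thesis using assms by (simp add: eps_inc_remove_smaller eps_inc_remove_larger)
next
  case False
  then have "y < x" using assms(4) by simp
  then show ?thesis using assms by (simp add: eps_inc_remove_smaller eps_inc_remove_larger)
qed

lemma eps_story_insert_at:
  assumes "0 < k" "k < length s"
  shows "eps_story (insert_at k Q s)
    = eps_story (take k s) * facet_sign (s!(k-1)) Q * facet_sign Q (s!k) * eps_story (drop k s)"
proof -
  have "drop k s = s!k # drop (Suc k) s" using assms(2) by (rule Cons_nth_drop_Suc[symmetric])
  then have "eps_story (Q # drop k s) = facet_sign Q (s!k) * eps_story (drop k s)" by simp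
  moreover have "eps_story (insert_at k Q s)
      = eps_story (take k s) * facet_sign (last (take k s)) (hd (Q # drop k s)) * eps_story (Q # drop k s)"
    unfolding insert_at_def by (rule eps_story_append) (use assms in auto)
  ultimately show ?thesis using last_take_nth[of k s] assms by (simp add: mult.assoc)
qed

lemma eps_story_insert_swap:
  assumes "finite R" "x \<in> R" "y \<in> R" "x \<noteq> y" "0 < k" "k < length s"
    and "s!k = R" "s!(k-1) = R - {x} - {y}"
  shows "eps_story (insert_at k (R - {y}) s) = - eps_story (insert_at k (R - {x}) s)"
proof -
  let ?T = "eps_story (take k s)" and ?D = "eps_story (drop k s)"
  have "facet_sign (s!(k-1)) (R - {x}) = eps_inc y (R - {x})"
    using assms(3,4,8) facet_sign_diff[of y "R - {x}"] by simp
  moreover have "facet_sign (s!(k-1)) (R - {y}) = eps_inc x (R - {y})"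
    using assms(2,4,8) facet_sign_diff[of x "R - {y}"] by (simp add: Diff_insert2[symmetric] insert_commute)
  moreover have "facet_sign (R - {x}) (s!k) = eps_inc x R" "facet_sign (R - {y}) (s!k) = eps_inc y R"
    using assms(2,3,7) by (simp_all add: facet_sign_diff)
  ultimately have "eps_story (insert_at k (R - {x}) s) = ?T * (eps_inc y (R - {x}) * eps_inc x R) * ?D"
    "eps_story (insert_at k (R - {y}) s) = ?T * (eps_inc x (R - {y}) * eps_inc y R) * ?D"
    by (simp_all only: eps_story_insert_at[OF assms(5,6)] mult.assoc)
  then show ?thesis
    unfolding eps_inc_remove_swap[OF assms(1-4)] by (simp only: mult_minus_left mult_minus_right minus_minus)
qed

lemma Ipart_eq_span: "Ipart K n = lin.span (genN K n \<union> genS K n)"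
  unfolding Ipart_def lin.span_Un IN_def IS_def cspan_eq_span plus_fun_def ..

lemma Ideal_eq_span: "Ideal K = lin.span (\<Union>n\<in>{1..}. genN K n \<union> genS K n)"
  unfolding Ideal_def cspan_eq_span ..

lemma zero_in_Ideal: "0 \<in> Ideal K"
  unfolding Ideal_eq_span by (rule lin.span_zero)

lemma Ipart_subset_Ideal: "1 \<le> n \<Longrightarrow> Ipart K n \<subseteq> Ideal K"
  unfolding Ipart_eq_span Ideal_eq_span by (rule lin.span_mono) auto

lemma finite_supp_generator:
  assumes "g \<in> genN K n \<union> genS K n"
  shows "finite (supp g)"
proof -
  obtain u v where "supp g \<subseteq> {u, v}"
    using assms
  proof
    assume "g \<in> genN K n"
    then obtain s where "g = single s" unfolding genN_def by blast
    then show thesis using that[of s s] by simp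
  next
    assume "g \<in> genS K n"
    then obtain u v where "g = (\<lambda>w. eps_story u * single u w - eps_story v * single v w)"
      unfolding genS_def by blast
    then have "supp g \<subseteq> {u, v}" by (auto simp: supp_def single_def)
    then show thesis by (rule that)
  qed
  then show ?thesis by (rule finite_subset) simp
qed

lemma signed_pair_in_Ipart:
  assumes "story K X" "story K Y" "length X = n + 1" "length Y = n + 1"
    and "hd X = hd Y" "last X = last Y" "fair X \<longleftrightarrow> fair Y"
    and "fair X \<Longrightarrow> a = c * eps_story X \<and> b = c * eps_story Y"
  shows "(\<lambda>w. a * single X w - b * single Y w) \<in> Ipart K n"
proof (cases "fair X")
  case True
  then have "(\<lambda>w. eps_story X * single X w - eps_story Y * single Y w) \<in> genS K n"
    using assms unfolding genS_def by blast
  then have "(\<lambda>w. c * (eps_story X * single X w - eps_story Y * single Y w)) \<in> Ipart K n"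
    unfolding Ipart_eq_span by (intro lin.span_scale lin.span_base) simp
  then show ?thesis using assms(8) True by (simp add: algebra_simps)
next
  case False
  then have "single X \<in> genN K n" "single Y \<in> genN K n"
    using assms unfolding genN_def by blast+
  then have "(\<lambda>w. a * single X w) - (\<lambda>w. b * single Y w) \<in> Ipart K n"
    unfolding Ipart_eq_span by (intro lin.span_diff lin.span_scale lin.span_base) auto
  then show ?thesis by (simp add: fun_diff_def)
qed

lemma glue_left_pair_in_Ipart:
  assumes "story K u" "story K v" "story K v'" "fair v" "fair v'"
    and "length v' = length v" "hd v' = hd v" "last v' = last v" "last u = hd v"
    and "length u + length v = n + 2"
  shows "(\<lambda>w. eps_story v * single (u @ tl v) w - eps_story v' * single (u @ tl v') w) \<in> Ipart K n"
proof (rule signed_pair_in_Ipart[where c = "eps_story u"])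
  have ne: "u \<noteq> []" "v \<noteq> []" "v' \<noteq> []" using assms(1-3) by (simp_all add: story_nonempty)
  show "story K (u @ tl v)" "story K (u @ tl v')"
    using story_glue[OF assms(1,2,9)] story_glue[OF assms(1,3)] assms(7,9) by simp_all
  show "length (u @ tl v) = n + 1" "length (u @ tl v') = n + 1"
    using assms(6,10) ne by (simp_all add: length_glue Suc_leI)
  show "hd (u @ tl v) = hd (u @ tl v')" using ne by simp
  show "last (u @ tl v) = last (u @ tl v')" using assms(7-9) ne by (simp add: last_glue)
  show "fair (u @ tl v) \<longleftrightarrow> fair (u @ tl v')" using assms ne by (simp add: fair_glue)
  have "eps_story u * eps_story (u @ tl v) = eps_story v"
    "eps_story u * eps_story (u @ tl v') = eps_story v'"
    using assms(7,9) ne by (simp_all add: eps_story_glue mult.assoc[symmetric])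
  then show "eps_story v = eps_story u * eps_story (u @ tl v) \<and>
      eps_story v' = eps_story u * eps_story (u @ tl v')" by simp
qed

lemma glue_right_pair_in_Ipart:
  assumes "story K u" "story K v" "story K v'" "fair v" "fair v'"
    and "length v' = length v" "hd v' = hd v" "last v' = last v" "last v = hd u"
    and "length u + length v = n + 2"
  shows "(\<lambda>w. eps_story v * single (v @ tl u) w - eps_story v' * single (v' @ tl u) w) \<in> Ipart K n"
proof (rule signed_pair_in_Ipart[where c = "eps_story u"])
  have ne: "u \<noteq> []" "v \<noteq> []" "v' \<noteq> []" using assms(1-3) by (simp_all add: story_nonempty)
  show "story K (v @ tl u)" "story K (v' @ tl u)"
    using story_glue[OF assms(2,1,9)] story_glue[OF assms(3,1)] assms(8,9) by simp_all
  show "length (v @ tl u) = n + 1" "length (v' @ tl u) = n + 1"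
    using assms(6,10) ne by (simp_all add: length_glue Suc_leI)
  show "hd (v @ tl u) = hd (v' @ tl u)" using assms(7) ne by simp
  show "last (v @ tl u) = last (v' @ tl u)" using assms(8,9) ne by (simp add: last_glue)
  show "fair (v @ tl u) \<longleftrightarrow> fair (v' @ tl u)" using assms ne by (simp add: fair_glue)
  have "eps_story u * eps_story (v @ tl u) = eps_story v"
    "eps_story u * eps_story (v' @ tl u) = eps_story v'"
    using assms(8,9) ne by (simp_all add: eps_story_glue mult.left_commute[of "eps_story u"])
  then show "eps_story v = eps_story u * eps_story (v @ tl u) \<and>
      eps_story v' = eps_story u * eps_story (v' @ tl u)" by simp
qed

section \<open>The ideal is two-sided\<close>

lemma smult_single_single:
  "smult (single u) (single v) = (if u \<noteq> [] \<and> v \<noteq> [] \<and> last u = hd v then single (u @ tl v) else 0)"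
  unfolding smult_def supp_single by (auto simp: single_def fun_eq_iff)

lemma smult_eq_lin_ext_left: "smult a x = lin_ext (\<lambda>u. smult (single u) x) a"
  unfolding smult_def lin_ext_def supp_single
  by (auto simp: single_def sum_distrib_left if_distrib intro!: ext sum.cong)

lemma smult_eq_lin_ext_right: "smult x a = lin_ext (\<lambda>v. smult x (single v)) a"
proof
  fix w
  let ?t = "\<lambda>u v. if u \<noteq> [] \<and> v \<noteq> [] \<and> last u = hd v \<and> w = u @ tl v then x u * a v else 0"
  have "smult x a w = (\<Sum>v\<in>supp a. \<Sum>u\<in>supp x. ?t u v)"
    unfolding smult_def by (rule sum.swap)
  also have "\<dots> = lin_ext (\<lambda>v. smult x (single v)) a w"
    unfolding lin_ext_def smult_def supp_single
    by (auto simp: single_def sum_distrib_left mult.commute intro!: sum.cong)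
  finally show "smult x a w = lin_ext (\<lambda>v. smult x (single v)) a w" .
qed

lemma unfair_glue_in_Ideal:
  assumes "story K u" "story K v" "\<not> (fair u \<and> fair v)" "last u = hd v" "3 \<le> length u + length v"
  shows "single (u @ tl v) \<in> Ideal K"
proof -
  define m where "m = length u + length v - 2"
  have ne: "u \<noteq> []" "v \<noteq> []" using assms(1,2) by (simp_all add: story_nonempty)
  have "story K (u @ tl v)" "\<not> fair (u @ tl v)"
    using story_glue[OF assms(1,2,4)] fair_glue[OF ne assms(4)] assms(3) by simp_all
  moreover have "length (u @ tl v) = m + 1" using ne(2) assms(5) unfolding m_def by (cases v) auto
  ultimately have "single (u @ tl v) \<in> genN K m" unfolding genN_def by blast
  moreover have "1 \<le> m" using assms(5) unfolding m_def by simp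
  ultimately show ?thesis unfolding Ideal_eq_span by (intro lin.span_base) auto
qed

lemma smult_story_generator_in_Ideal:
  assumes u: "story K u" and g: "g \<in> genN K n \<union> genS K n" and n: "1 \<le> n"
  shows "smult (single u) g \<in> Ideal K"
  using g
proof
  assume "g \<in> genN K n"
  then obtain v where v: "g = single v" "story K v" "length v = n + 1" "\<not> fair v"
    unfolding genN_def by blast
  have "3 \<le> length u + length v" using story_nonempty[OF u] v(3) n by (cases u) auto
  then show ?thesis
    using unfair_glue_in_Ideal[OF u v(2)] v(1,4) by (auto simp: smult_single_single zero_in_Ideal)
next
  assume "g \<in> genS K n"
  then obtain v v' where g: "g = (\<lambda>w. eps_story v * single v w - eps_story v' * single v' w)"
    and v: "story K v" "story K v'" "length v = n + 1" "length v' = n + 1" "fair v" "fair v'"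
      "hd v = hd v'" "last v = last v'"
    unfolding genS_def by blast
  have ne: "u \<noteq> []" "v \<noteq> []" "v' \<noteq> []" using u v story_nonempty by auto
  have "smult (single u) g = lin_ext (\<lambda>v. smult (single u) (single v)) g"
    by (rule smult_eq_lin_ext_right)
  also have "\<dots> = (\<lambda>w. eps_story v * smult (single u) (single v) w
      - eps_story v' * smult (single u) (single v') w)"
    unfolding g by (rule lin_ext_diff_singles)
  also have "\<dots> \<in> Ideal K"
  proof (cases "last u = hd v")
    case True
    have "(\<lambda>w. eps_story v * single (u @ tl v) w - eps_story v' * single (u @ tl v') w)
        \<in> Ipart K (length u + n - 1)"
      by (rule glue_left_pair_in_Ipart) (use u v True ne in auto)
    moreover have "Ipart K (length u + n - 1) \<subseteq> Ideal K"
      using ne(1) n by (intro Ipart_subset_Ideal) (cases u, simp_all)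
    ultimately show ?thesis using True ne v(7) by (auto simp: smult_single_single)
  next
    case False
    then show ?thesis using zero_in_Ideal v(7) by (simp add: smult_single_single zero_fun_def)
  qed
  finally show ?thesis .
qed

lemma smult_generator_story_in_Ideal:
  assumes u: "story K u" and g: "g \<in> genN K n \<union> genS K n" and n: "1 \<le> n"
  shows "smult g (single u) \<in> Ideal K"
  using g
proof
  assume "g \<in> genN K n"
  then obtain v where v: "g = single v" "story K v" "length v = n + 1" "\<not> fair v"
    unfolding genN_def by blast
  have "3 \<le> length v + length u" using story_nonempty[OF u] v(3) n by (cases u) auto
  then show ?thesis
    using unfair_glue_in_Ideal[OF v(2) u] v(1,4) by (auto simp: smult_single_single zero_in_Ideal)
next
  assume "g \<in> genS K n"
  then obtain v v' where g: "g = (\<lambda>w. eps_story v * single v w - eps_story v' * single v' w)"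
    and v: "story K v" "story K v'" "length v = n + 1" "length v' = n + 1" "fair v" "fair v'"
      "hd v = hd v'" "last v = last v'"
    unfolding genS_def by blast
  have ne: "u \<noteq> []" "v \<noteq> []" "v' \<noteq> []" using u v story_nonempty by auto
  have "smult g (single u) = lin_ext (\<lambda>v. smult (single v) (single u)) g"
    by (rule smult_eq_lin_ext_left)
  also have "\<dots> = (\<lambda>w. eps_story v * smult (single v) (single u) w
      - eps_story v' * smult (single v') (single u) w)"
    unfolding g by (rule lin_ext_diff_singles)
  also have "\<dots> \<in> Ideal K"
  proof (cases "last v = hd u")
    case True
    have "(\<lambda>w. eps_story v * single (v @ tl u) w - eps_story v' * single (v' @ tl u) w)
        \<in> Ipart K (length u + n - 1)"
      by (rule glue_right_pair_in_Ipart) (use u v True ne in auto)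
    moreover have "Ipart K (length u + n - 1) \<subseteq> Ideal K"
      using ne(1) n by (intro Ipart_subset_Ideal) (cases u, simp_all)
    ultimately show ?thesis using True ne v(8) by (auto simp: smult_single_single)
  next
    case False
    then show ?thesis using zero_in_Ideal v(8) by (simp add: smult_single_single zero_fun_def)
  qed
  finally show ?thesis .
qed

lemma smult_single_Ideal:
  assumes u: "story K u" and x: "x \<in> Ideal K"
  shows "smult (single u) x \<in> Ideal K" "smult x (single u) \<in> Ideal K"
proof -
  let ?G = "\<Union>n\<in>{1..}. genN K n \<union> genS K n"
  have x: "x \<in> lin.span ?G" and sub: "lin.subspace (Ideal K)" using x by (simp_all add: Ideal_eq_span)
  have G: "finite (supp g) \<and> smult (single u) g \<in> Ideal K \<and> smult g (single u) \<in> Ideal K"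
    if "g \<in> ?G" for g
  proof -
    obtain n where "1 \<le> n" "g \<in> genN K n \<union> genS K n" using \<open>g \<in> ?G\<close> by auto
    then show ?thesis using finite_supp_generator smult_story_generator_in_Ideal[OF u]
        smult_generator_story_in_Ideal[OF u] by blast
  qed
  have "lin_ext (\<lambda>v. smult (single u) (single v)) x \<in> Ideal K"
    by (rule lin_ext_span_in_subspace[OF sub x]) (use G in \<open>simp add: smult_eq_lin_ext_right[symmetric]\<close>)
  then show "smult (single u) x \<in> Ideal K" unfolding smult_eq_lin_ext_right[of "single u" x] .
  have "lin_ext (\<lambda>v. smult (single v) (single u)) x \<in> Ideal K"
    by (rule lin_ext_span_in_subspace[OF sub x]) (use G in \<open>simp add: smult_eq_lin_ext_left[symmetric]\<close>)
  then show "smult x (single u) \<in> Ideal K" unfolding smult_eq_lin_ext_left[of x "single u"] .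
qed

lemma Ideal_two_sided:
  assumes x: "x \<in> Ideal K" and a: "elem K a"
  shows "smult a x \<in> Ideal K \<and> smult x a \<in> Ideal K"
proof -
  have fa: "finite (supp a)" and sa: "\<And>u. u \<in> supp a \<Longrightarrow> story K u"
    using a unfolding elem_def by auto
  have sub: "lin.subspace (Ideal K)" by (simp add: Ideal_eq_span)
  have "lin_ext (\<lambda>u. smult (single u) x) a \<in> Ideal K"
    by (rule lin_ext_in_subspace[OF sub fa]) (rule smult_single_Ideal(1)[OF sa x])
  moreover have "lin_ext (\<lambda>v. smult x (single v)) a \<in> Ideal K"
    by (rule lin_ext_in_subspace[OF sub fa]) (rule smult_single_Ideal(2)[OF sa x])
  ultimately show ?thesis
    unfolding smult_eq_lin_ext_left[of a x] smult_eq_lin_ext_right[of x a] ..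
qed

section \<open>The ideal is closed under the differential\<close>

lemma dS_eq_lin_ext: "dS K = lin_ext (dstory K)"
  unfolding dS_def lin_ext_def ..

definition insertable :: "'a set set \<Rightarrow> 'a set list \<Rightarrow> nat \<Rightarrow> 'a set set" where
  "insertable K s k = {Q \<in> K. (0 < k \<longrightarrow> Q \<noteq> s!(k-1)) \<and> (k < length s \<longrightarrow> Q \<noteq> s!k)}"

definition dstory_part ::
    "'a set set \<Rightarrow> ('a set list \<Rightarrow> bool) \<Rightarrow> 'a set list \<Rightarrow> 'a set list \<Rightarrow> complex" where
  "dstory_part K P s = (\<Sum>k\<in>{0..length s}. \<Sum>Q | Q \<in> insertable K s k \<and> P (insert_at k Q s).
      (\<lambda>w. (-1)^k * single (insert_at k Q s) w))"

lemma dstory_eq_parts: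
  assumes "finite K"
  shows "dstory K s = dstory_part K fair s + dstory_part K (\<lambda>t. \<not> fair t) s"
proof -
  have "dstory K s = (\<Sum>k\<in>{0..length s}. \<Sum>Q\<in>insertable K s k. (\<lambda>w. (-1)^k * single (insert_at k Q s) w))"
    unfolding dstory_def insertable_def insert_at_def single_def sum_fun_apply
    by (intro ext sum.cong refl) simp
  also have "\<dots> = dstory_part K fair s + dstory_part K (\<lambda>t. \<not> fair t) s"
    unfolding dstory_part_def sum.distrib[symmetric]
  proof (rule sum.cong[OF refl])
    fix k
    have "finite (insertable K s k)" using assms by (simp add: insertable_def)
    then show "(\<Sum>Q\<in>insertable K s k. (\<lambda>w. (-1)^k * single (insert_at k Q s) w))
      = (\<Sum>Q | Q \<in> insertable K s k \<and> fair (insert_at k Q s). (\<lambda>w. (-1)^k * single (insert_at k Q s) w))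
      + (\<Sum>Q | Q \<in> insertable K s k \<and> \<not> fair (insert_at k Q s). (\<lambda>w. (-1)^k * single (insert_at k Q s) w))"
      by (subst sum.Int_Diff[where B = "{Q. fair (insert_at k Q s)}"]) (auto intro!: arg_cong2[where f = "(+)"] sum.cong)
  qed
  finally show ?thesis .
qed

lemma story_insert_at:
  assumes "story K s" "k \<le> length s" "Q \<in> insertable K s k"
  shows "story K (insert_at k Q s)"
proof -
  have "successively (\<noteq>) (take k s)" "successively (\<noteq>) (drop k s)" "set s \<subseteq> K"
    using assms(1) successively_take_drop[OF assms(2)] by (auto simp: story_iff_successively)
  then show ?thesis
    using assms(3) successively_insert_at[OF assms(2)]
    by (auto simp: story_iff_successively insert_at_def insertable_def
        dest: in_set_takeD in_set_dropD)
qed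

lemma dstory_part_unfair_in_Ipart:
  assumes "story K s"
  shows "dstory_part K (\<lambda>t. \<not> fair t) s \<in> Ipart K (length s)"
  unfolding dstory_part_def Ipart_eq_span
  by (intro lin.span_sum lin.span_scale lin.span_base)
    (auto simp: genN_def intro: story_insert_at[OF assms])

lemma dstory_part_fair_of_fair:
  assumes "story K s" "fair s"
  shows "dstory_part K fair s = (\<Sum>Q | Q \<in> K \<and> facet Q (hd s). single (Q # s))
    + (\<Sum>Q | Q \<in> K \<and> facet (last s) Q. (\<lambda>w. (-1) ^ length s * single (s @ [Q]) w))"
proof -
  obtain m where m: "length s = Suc m" using story_nonempty[OF assms(1)] by (cases s) auto
  have fair_Nil: "fair []" by (simp add: fair_def)
  define g where "g k = (\<Sum>Q | Q \<in> insertable K s k \<and> fair (insert_at k Q s).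
    (\<lambda>w. (-1)^k * single (insert_at k Q s) w))" for k
  have "g k = 0" if "k \<in> {1..m}" for k
  proof -
    have "\<not> fair (insert_at k Q s)" for Q
      using fair_insert_at[of k s Q] fair_take_drop[of k s] assms(2) that m facet_facet_not_facet
      by auto
    then show ?thesis unfolding g_def by simp
  qed
  moreover have "g 0 = (\<Sum>Q | Q \<in> K \<and> facet Q (hd s). single (Q # s))"
  proof -
    have "hd s = s ! 0" using m by (cases s) auto
    then have "{Q. Q \<in> insertable K s 0 \<and> fair (insert_at 0 Q s)} = {Q. Q \<in> K \<and> facet Q (hd s)}"
      using fair_insert_at[of 0 s] assms(2) m facet_neq
      by (auto simp: insertable_def fair_Nil)
    then show ?thesis unfolding g_def by (simp add: insert_at_def)
  qed
  moreover have "g (Suc m) = (\<Sum>Q | Q \<in> K \<and> facet (last s) Q. (\<lambda>w. (-1) ^ length s * single (s @ [Q]) w))"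
  proof -
    have "last s = s ! m" using m by (cases s rule: rev_cases) auto
    then have "{Q. Q \<in> insertable K s (Suc m) \<and> fair (insert_at (Suc m) Q s)} = {Q. Q \<in> K \<and> facet (last s) Q}"
      using fair_insert_at[of "Suc m" s] assms(2) m facet_neq
      by (auto simp: insertable_def fair_Nil)
    moreover have "insert_at (Suc m) Q s = s @ [Q]" for Q using m by (simp add: insert_at_def)
    ultimately show ?thesis unfolding g_def m by simp
  qed
  moreover have "dstory_part K fair s = g 0 + sum g {1..m} + g (Suc m)"
    unfolding dstory_part_def g_def m
    by (simp add: sum.atLeast0_atMost_Suc sum.atLeast_Suc_atMost)
  ultimately show ?thesis by simp
qed

lemma prepend_pair_in_Ipart:
  assumes u: "story K u" "fair u" and v: "story K v" "fair v"
    and len: "length u = n + 1" "length v = n + 1" and ends: "hd u = hd v" "last u = last v"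
    and Q: "Q \<in> K" "facet Q (hd u)"
  shows "(\<lambda>w. eps_story u * single (Q # u) w - eps_story v * single (Q # v) w) \<in> Ipart K (n + 1)"
proof -
  have ne: "u \<noteq> []" "v \<noteq> []" using u(1) v(1) by (simp_all add: story_nonempty)
  have "story K [Q, hd u]" "fair [Q, hd u]"
    using Q u(1) ne(1) facet_neq by (auto simp: story_iff_successively fair_iff_successively)
  then have "(\<lambda>w. eps_story u * single ([Q, hd u] @ tl u) w - eps_story v * single ([Q, hd u] @ tl v) w)
      \<in> Ipart K (n + 1)"
    by (intro glue_left_pair_in_Ipart u v) (use ends len in auto)
  moreover have "[Q, hd u] @ tl u = Q # u" using ne(1) by simp
  moreover have "[Q, hd u] @ tl v = Q # v" using ne(2) ends(1) by simp
  ultimately show ?thesis by simp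
qed

lemma append_pair_in_Ipart:
  assumes u: "story K u" "fair u" and v: "story K v" "fair v"
    and len: "length u = n + 1" "length v = n + 1" and ends: "hd u = hd v" "last u = last v"
    and Q: "Q \<in> K" "facet (last u) Q"
  shows "(\<lambda>w. eps_story u * single (u @ [Q]) w - eps_story v * single (v @ [Q]) w) \<in> Ipart K (n + 1)"
proof -
  have "story K [last u, Q]"
    using Q u(1) story_nonempty[OF u(1)] facet_neq by (auto simp: story_iff_successively)
  then have "(\<lambda>w. eps_story u * single (u @ tl [last u, Q]) w - eps_story v * single (v @ tl [last u, Q]) w)
      \<in> Ipart K (n + 1)"
    by (intro glue_right_pair_in_Ipart u v) (use ends len in auto)
  then show ?thesis by simp
qed

lemma dstory_part_fair_generator_in_Ipart:
  assumes u: "story K u" "fair u" and v: "story K v" "fair v"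
    and len: "length u = n + 1" "length v = n + 1" and ends: "hd u = hd v" "last u = last v"
  shows "(\<lambda>w. eps_story u * dstory_part K fair u w - eps_story v * dstory_part K fair v w)
    \<in> Ipart K (n + 1)"
proof -
  let ?A = "{Q. Q \<in> K \<and> facet Q (hd u)}" and ?B = "{Q. Q \<in> K \<and> facet (last u) Q}"
  define c :: complex where "c = (-1) ^ (n + 1)"
  have "(\<lambda>w. eps_story u * dstory_part K fair u w - eps_story v * dstory_part K fair v w)
    = (\<Sum>Q\<in>?A. (\<lambda>w. eps_story u * single (Q # u) w - eps_story v * single (Q # v) w))
      + (\<Sum>Q\<in>?B. (\<lambda>w. c * (eps_story u * single (u @ [Q]) w - eps_story v * single (v @ [Q]) w)))"
    unfolding dstory_part_fair_of_fair[OF u] dstory_part_fair_of_fair[OF v] ends len c_def[symmetric]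
    by (simp add: fun_eq_iff sum_fun_apply sum_subtractf sum_distrib_left algebra_simps)
  also have "\<dots> \<in> Ipart K (n + 1)"
    using prepend_pair_in_Ipart[OF u v len ends] append_pair_in_Ipart[OF u v len ends]
    unfolding Ipart_eq_span by (intro lin.span_add lin.span_sum lin.span_scale) auto
  finally show ?thesis .
qed

lemma fair_insertions_into_unfair:
  assumes sc: "simplicial_complex V K" and s: "story K s" "\<not> fair s" and k: "k \<le> length s"
    and Q: "Q \<in> insertable K s k" "fair (insert_at k Q s)"
  obtains x y where "0 < k" "k < length s" "x \<in> s!k" "y \<in> s!k" "x \<noteq> y"
    "s!(k-1) = s!k - {x} - {y}"
    "{Q. Q \<in> insertable K s k \<and> fair (insert_at k Q s)} = {s!k - {x}, s!k - {y}}"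
proof -
  have ft: "fair (take k s)" and fd: "fair (drop k s)"
    and P: "0 < k \<Longrightarrow> facet (s!(k-1)) Q" and R: "k < length s \<Longrightarrow> facet Q (s!k)"
    using Q(2) fair_insert_at[OF k] by auto
  have k0: "0 < k" using fd s(2) by (cases k) auto
  have kl: "k < length s" using ft s(2) k by (cases "k = length s") auto
  define P R where "P = s!(k-1)" and "R = s!k"
  have "\<not> facet P R" using fair_take_drop[OF k] ft fd s(2) k0 kl unfolding P_def R_def by blast
  obtain x where x: "x \<in> R" "Q = R - {x}" using R[OF kl] unfolding facet_def R_def by blast
  obtain y where y: "y \<in> Q" "P = Q - {y}" using P[OF k0] unfolding facet_def P_def by blast
  have xy: "y \<in> R" "x \<noteq> y" "P = R - {x} - {y}" using x y by auto
  have RK: "R \<in> K" "P \<in> K" using s(1) k0 kl unfolding story_def P_def R_def by auto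
  have "R - {y} \<in> K"
    by (rule simplicial_complex_face[OF sc RK(1)]) (use simplicial_complex_nonempty[OF sc RK(2)] xy in auto)
  moreover have "facet P (R - {y})" "facet (R - {y}) R" using x(1) xy unfolding facet_def by blast+
  ultimately have "R - {y} \<in> insertable K s k" "fair (insert_at k (R - {y}) s)"
    using fair_insert_at[OF k] ft fd k0 kl facet_neq unfolding insertable_def P_def R_def by auto
  moreover have "Q' \<in> {R - {x}, R - {y}}" if "fair (insert_at k Q' s)" for Q'
  proof -
    have "facet P Q'" "facet Q' R"
      using that fair_insert_at[OF k] k0 kl unfolding P_def R_def by auto
    then show ?thesis using xy unfolding facet_def by blast
  qed
  ultimately have "{Q. Q \<in> insertable K s k \<and> fair (insert_at k Q s)} = {R - {x}, R - {y}}"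
    using Q x by blast
  then show thesis using that k0 kl x(1) xy unfolding P_def R_def by blast
qed

lemma dstory_part_fair_of_unfair_in_Ipart:
  assumes sc: "simplicial_complex V K" and s: "story K s" "\<not> fair s"
  shows "dstory_part K fair s \<in> Ipart K (length s)"
  unfolding dstory_part_def
proof (rule lin.subspace_sum)
  show "lin.subspace (Ipart K (length s))" by (simp add: Ipart_eq_span)
  fix k assume "k \<in> {0..length s}"
  then have k: "k \<le> length s" by simp
  let ?E = "{Q. Q \<in> insertable K s k \<and> fair (insert_at k Q s)}"
  show "(\<Sum>Q\<in>?E. (\<lambda>w. (-1)^k * single (insert_at k Q s) w)) \<in> Ipart K (length s)"
  proof (cases "?E = {}")
    case True
    show ?thesis unfolding True by (simp add: Ipart_eq_span lin.span_zero)
  next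
    case False
    then obtain Q where Q: "Q \<in> insertable K s k" "fair (insert_at k Q s)" by blast
    obtain x y where xy: "0 < k" "k < length s" "x \<in> s!k" "y \<in> s!k" "x \<noteq> y"
      "s!(k-1) = s!k - {x} - {y}" and E: "?E = {s!k - {x}, s!k - {y}}"
      by (rule fair_insertions_into_unfair[OF sc s k Q])
    define sx sy where "sx = insert_at k (s!k - {x}) s" and "sy = insert_at k (s!k - {y}) s"
    have "s!k \<in> K" using s(1) nth_mem[OF xy(2)] by (auto simp: story_def)
    then have eps: "eps_story sy = - eps_story sx"
      unfolding sx_def sy_def
      by (intro eps_story_insert_swap) (use sc xy in \<open>auto intro: simplicial_complex_finite_simplex\<close>)
    have "s!k - {x} \<noteq> s!k - {y}" using xy by auto
    then have "(\<Sum>Q\<in>?E. (\<lambda>w. (-1)^k * single (insert_at k Q s) w))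
        = (\<lambda>w. (-1)^k * single sx w - (- ((-1)^k)) * single sy w)"
      unfolding E sx_def sy_def by (simp add: fun_eq_iff)
    also have "\<dots> \<in> Ipart K (length s)"
    proof (rule signed_pair_in_Ipart[where c = "(-1)^k * eps_story sx"])
      have "s!k - {x} \<in> ?E" "s!k - {y} \<in> ?E" unfolding E by simp_all
      then show "story K sx" "story K sy" "fair sx \<longleftrightarrow> fair sy"
        using story_insert_at[OF s(1) k] unfolding sx_def sy_def by simp_all
      show "length sx = length s + 1" "length sy = length s + 1"
        unfolding sx_def sy_def using k by simp_all
      show "hd sx = hd sy" "last sx = last sy"
        unfolding sx_def sy_def using xy s(1) by (simp_all add: hd_insert_at last_insert_at story_nonempty)
      show "(-1)^k = (-1)^k * eps_story sx * eps_story sx \<and> - ((-1)^k) = (-1)^k * eps_story sx * eps_story sy"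
        unfolding eps by (simp add: mult.assoc)
    qed
    finally show ?thesis .
  qed
qed

lemma dstory_unfair_in_Ipart:
  assumes sc: "simplicial_complex V K" and s: "story K s" "\<not> fair s"
  shows "dstory K s \<in> Ipart K (length s)"
  unfolding dstory_eq_parts[OF simplicial_complex_finite[OF sc]] Ipart_eq_span
  using dstory_part_fair_of_unfair_in_Ipart[OF sc s] dstory_part_unfair_in_Ipart[OF s(1)]
  unfolding Ipart_eq_span by (rule lin.span_add)

lemma dS_generator_in_Ipart:
  assumes sc: "simplicial_complex V K" and g: "g \<in> genN K n \<union> genS K n"
  shows "dS K g \<in> Ipart K (n + 1)"
  using g
proof
  assume "g \<in> genN K n"
  then obtain s where s: "g = single s" "story K s" "length s = n + 1" "\<not> fair s"
    unfolding genN_def by blast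
  then show ?thesis using dstory_unfair_in_Ipart[OF sc s(2,4)] by (simp add: dS_eq_lin_ext)
next
  assume "g \<in> genS K n"
  then obtain u v where g: "g = (\<lambda>w. eps_story u * single u w - eps_story v * single v w)"
    and uv: "story K u" "story K v" "length u = n + 1" "length v = n + 1" "fair u" "fair v"
      "hd u = hd v" "last u = last v"
    unfolding genS_def by blast
  let ?F = "dstory_part K fair" and ?U = "dstory_part K (\<lambda>t. \<not> fair t)"
  have "dS K g = (\<lambda>w. eps_story u * ?U u w - eps_story v * ?U v w)
      + (\<lambda>w. eps_story u * ?F u w - eps_story v * ?F v w)"
    unfolding dS_eq_lin_ext g lin_ext_diff_singles dstory_eq_parts[OF simplicial_complex_finite[OF sc]]
    by (simp add: fun_eq_iff algebra_simps)
  also have "\<dots> \<in> Ipart K (n + 1)"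
  proof -
    have "?U u \<in> Ipart K (n + 1)" "?U v \<in> Ipart K (n + 1)"
      using dstory_part_unfair_in_Ipart uv by fastforce+
    then have "(\<lambda>w. eps_story u * ?U u w) - (\<lambda>w. eps_story v * ?U v w) \<in> Ipart K (n + 1)"
      unfolding Ipart_eq_span by (intro lin.span_diff lin.span_scale)
    then show ?thesis
      using dstory_part_fair_generator_in_Ipart[OF uv(1,5,2,6,3,4,7,8)]
      unfolding Ipart_eq_span fun_diff_def by (intro lin.span_add)
  qed
  finally show ?thesis .
qed

lemma dS_in_Ipart_Suc:
  assumes sc: "simplicial_complex V K" and x: "x \<in> Ipart K n"
  shows "dS K x \<in> Ipart K (n + 1)"
  unfolding dS_eq_lin_ext
  by (rule lin_ext_span_in_subspace[of _ x "genN K n \<union> genS K n"])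
    (use x finite_supp_generator dS_generator_in_Ipart[OF sc] in
      \<open>auto simp: Ipart_eq_span dS_eq_lin_ext\<close>)

lemma dS_in_Ideal:
  assumes sc: "simplicial_complex V K" and x: "x \<in> Ideal K"
  shows "dS K x \<in> Ideal K"
  unfolding dS_eq_lin_ext
proof (rule lin_ext_span_in_subspace[of _ x "\<Union>n\<in>{1..}. genN K n \<union> genS K n"])
  show "lin.subspace (Ideal K)" "x \<in> lin.span (\<Union>n\<in>{1..}. genN K n \<union> genS K n)"
    using x by (simp_all add: Ideal_eq_span)
  fix g assume "g \<in> (\<Union>n\<in>{1..}. genN K n \<union> genS K n)"
  then obtain n where n: "1 \<le> n" "g \<in> genN K n \<union> genS K n" by auto
  have "dS K g \<in> Ideal K" using dS_generator_in_Ipart[OF sc n(2)] Ipart_subset_Ideal[of "n + 1"] by auto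
  then show "finite (supp g) \<and> lin_ext (dstory K) g \<in> Ideal K"
    using finite_supp_generator[OF n(2)] by (simp add: dS_eq_lin_ext)
qed

theorem mainTheorem2:
  fixes V :: "'a::linorder set" and K :: "'a set set"
  assumes "simplicial_complex V K"
  shows "(\<forall>x\<in>Ideal K. \<forall>a. elem K a \<longrightarrow> smult a x \<in> Ideal K \<and> smult x a \<in> Ideal K)
       \<and> (\<forall>n\<ge>1. \<forall>x\<in>Ipart K n. dS K x \<in> Ipart K (n + 1))
       \<and> (\<forall>x\<in>Ideal K. dS K x \<in> Ideal K)"
  using Ideal_two_sided dS_in_Ipart_Suc[OF assms] dS_in_Ideal[OF assms] by blast

end
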